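(* Assume $\kappa>0$, $\phi_*:=\inf_{r\ge0}\phi(r)>0$ and $\phi_*M>\sigma\bar\theta$. Then every solution of system (CSF) aligns exponentially fast: there exist $C_0,\delta>0$, depending on the initial data and the parameters, such that $$\mathcal A(t):=\max_{i,j}|\mathbf v_i(t)-\mathbf v_j(t)|\le C_0e^{-\delta t}\quad\text{for all } t\ge0.$$
   Context: Fix integers $N\ge1$, $n\ge1$, masses $m_1,\dots,m_N>0$ with $M=\sum_i m_i$, parameters $\sigma>0$, $p>0$, $\kappa\ge0$, and a communication kernel $\phi:[0,\infty)\to(0,\infty)$ that is smooth, positive and non-increasing. Write $\phi_{ij}=\phi(|\mathbf x_i-\mathbf x_j|)$, with $|\cdot|$ the Euclidean norm on $\mathbb R^n$. System (CSF) is, for $i=1,\dots,N$, $$\dot{\mathbf x}_i=\mathbf v_i,\qquad \dot{\mathbf v}_i=\sum_{j=1}^N m_j\phi_{ij}(\mathbf v_j-\mathbf v_i)+\sigma(\theta_i-|\mathbf v_i|^p)\mathbf v_i,\qquad \dot\theta_i=\kappa\sum_{j=1}^N m_j\phi_{ij}(\theta_j-\theta_i),$$ with $\mathbf x_i,\mathbf v_i\in\mathbb R^n$ and initial values $\theta_i(0)>0$; solutions are considered for $t\ge0$. Set $\bar\theta=\frac1M\sum_i m_i\theta_i(0)$; this weighted average is conserved in time. *)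

theory Defs
  imports "HOL-Analysis.Analysis"
begin

definition smooth_on_nonneg :: "(real \<Rightarrow> real) \<Rightarrow> bool" where
  "smooth_on_nonneg f \<longleftrightarrow>
     (\<exists>D :: nat \<Rightarrow> real \<Rightarrow> real. D 0 = f \<and>
        (\<forall>k. \<forall>r\<ge>0. (D k has_real_derivative D (Suc k) r) (at r within {0..})))"

definition comm_kernel :: "(real \<Rightarrow> real) \<Rightarrow> bool" where
  "comm_kernel \<phi> \<longleftrightarrow> smooth_on_nonneg \<phi> \<and> (\<forall>r\<ge>0. \<phi> r > 0) \<and>
     (\<forall>r s. 0 \<le> r \<longrightarrow> r \<le> s \<longrightarrow> \<phi> s \<le> \<phi> r)"

definition CSF_solution ::
  "nat \<Rightarrow> (nat \<Rightarrow> real) \<Rightarrow> real \<Rightarrow> real \<Rightarrow> real \<Rightarrow> (real \<Rightarrow> real) \<Rightarrow>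
   (nat \<Rightarrow> real \<Rightarrow> 'a::euclidean_space) \<Rightarrow> (nat \<Rightarrow> real \<Rightarrow> 'a) \<Rightarrow> (nat \<Rightarrow> real \<Rightarrow> real) \<Rightarrow> bool"
  where
  "CSF_solution N m \<sigma> p \<kappa> \<phi> x v \<theta> \<longleftrightarrow>
     (\<forall>i<N. \<forall>t\<ge>0.
        (x i has_vector_derivative v i t) (at t within {0..}) \<and>
        (v i has_vector_derivative
           ((\<Sum>j<N. (m j * \<phi> (norm (x i t - x j t))) *\<^sub>R (v j t - v i t))
            + (\<sigma> * (\<theta> i t - norm (v i t) powr p)) *\<^sub>R v i t)) (at t within {0..}) \<and>
        (\<theta> i has_real_derivative
           (\<kappa> * (\<Sum>j<N. m j * \<phi> (norm (x i t - x j t)) * (\<theta> j t - \<theta> i t))))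
           (at t within {0..}))"

definition vel_diam :: "nat \<Rightarrow> (nat \<Rightarrow> real \<Rightarrow> 'a::real_normed_vector) \<Rightarrow> real \<Rightarrow> real" where
  "vel_diam N v t = Max {norm (v i t - v j t) | i j. i < N \<and> j < N}"

end

theory Submission
  imports Defs
begin

(* The temperatures follow a linear consensus dynamics whose weights are at least \<phi>_min, so by
   conservation of the weighted mean they converge to \<theta>_bar at rate \<kappa> \<phi>_min M.
   Consequently they stay bounded, and the friction term \<sigma>(\<theta>_i - |v_i|^p) v_i confines all speeds.
   For the pair of particles realising the velocity diameter W, the alignment term decreases W^2
   at rate at least 2 \<phi>_min M, while the friction term, by monotonicity of v \<mapsto> |v|^p v, increases it
   at rate at most 2 \<sigma> \<theta>_i plus an error proportional to |\<theta>_i - \<theta>_j|. Since \<theta>_i \<rightarrow> \<theta>_bar and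
   \<phi>_min M > \<sigma> \<theta>_bar, W^2 eventually decays exponentially. All three estimates are propagated
   from "decreasing at the first touching time" to "valid for all times" by a barrier argument. *)

lemma has_real_derivative_norm_power2:
  fixes w :: "real \<Rightarrow> 'a::real_inner"
  assumes "(w has_vector_derivative w') (at t within S)"
  shows "((\<lambda>t. (norm (w t))\<^sup>2) has_real_derivative 2 * inner (w t) w') (at t within S)"
proof -
  have "(w has_derivative (\<lambda>h. h *\<^sub>R w')) (at t within S)"
    using assms by (simp add: has_vector_derivative_def)
  from has_derivative_inner[OF this this] show ?thesis
    unfolding has_field_derivative_def power2_norm_eq_inner
    by (rule has_derivative_eq_rhs) (auto simp: inner_commute fun_eq_iff algebra_simps)
qed

lemma first_touch:
  fixes G :: "'k \<Rightarrow> real \<Rightarrow> real"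
  assumes "finite K" and cont: "\<And>j. j \<in> K \<Longrightarrow> continuous_on {t0..} (G j)"
    and start: "\<And>j. j \<in> K \<Longrightarrow> G j t0 > 0"
    and "k \<in> K" "t0 \<le> t" "G k t \<le> 0"
  obtains T k1 where "k1 \<in> K" "t0 < T" "G k1 T = 0" "\<And>j. j \<in> K \<Longrightarrow> G j T \<ge> 0"
    "\<And>j s. j \<in> K \<Longrightarrow> t0 \<le> s \<Longrightarrow> s < T \<Longrightarrow> G j s > 0"
proof -
  define S where "S = (\<Union>j\<in>K. {t0..t} \<inter> G j -` {..0})"
  have "closed S" unfolding S_def
  proof (intro closed_UN \<open>finite K\<close> ballI)
    fix j assume "j \<in> K"
    then have "continuous_on {t0..t} (G j)" by (rule continuous_on_subset[OF cont]) auto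
    then show "closed ({t0..t} \<inter> G j -` {..0})" by (rule continuous_closed_preimage) auto
  qed
  moreover have "t \<in> S" using assms(4-6) unfolding S_def by auto
  moreover have bdd: "bdd_below S" unfolding S_def by (rule bdd_belowI[of _ t0]) auto
  ultimately have "Inf S \<in> S" by (intro closed_contains_Inf) auto
  then obtain k1 where k1: "k1 \<in> K" "t0 \<le> Inf S" "G k1 (Inf S) \<le> 0" unfolding S_def by auto
  have pos: "G j s > 0" if "j \<in> K" "t0 \<le> s" "s < Inf S" for j s
  proof (rule ccontr)
    assume "\<not> G j s > 0"
    with that \<open>Inf S \<in> S\<close> have "s \<in> S" unfolding S_def by (force simp: not_less)
    then have "Inf S \<le> s" using bdd by (rule cInf_lower)
    with that show False by simp
  qed
  have after: "t0 < Inf S" using k1 start[OF k1(1)] by (cases "Inf S = t0") auto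
  have nonneg: "G j (Inf S) \<ge> 0" if j: "j \<in> K" for j
  proof (rule ccontr)
    assume "\<not> G j (Inf S) \<ge> 0"
    moreover have "continuous_on {t0..Inf S} (G j)" by (rule continuous_on_subset[OF cont[OF j]]) auto
    ultimately obtain s where "t0 \<le> s" "s \<le> Inf S" "G j s = 0"
      using IVT2'[of "G j" "Inf S" 0 t0] start[OF j] after by auto
    moreover from \<open>G j s = 0\<close> \<open>\<not> G j (Inf S) \<ge> 0\<close> have "s \<noteq> Inf S" by auto
    ultimately show False using pos[OF j, of s] by simp
  qed
  show thesis using k1 nonneg[OF k1(1)] by (intro that[OF k1(1) after _ nonneg pos]) auto
qed

lemma barrier_principle:
  fixes F :: "'k \<Rightarrow> real \<Rightarrow> real" and b :: "real \<Rightarrow> real"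
  assumes "finite K"
    and dF: "\<And>k t. k \<in> K \<Longrightarrow> t \<ge> t0 \<Longrightarrow> (F k has_real_derivative F' k t) (at t within {t0..})"
    and db: "\<And>t. t \<ge> t0 \<Longrightarrow> (b has_real_derivative b' t) (at t within {t0..})"
    and start: "\<And>k. k \<in> K \<Longrightarrow> F k t0 < b t0"
    and touch: "\<And>k t. k \<in> K \<Longrightarrow> t > t0 \<Longrightarrow> F k t = b t \<Longrightarrow> (\<And>j. j \<in> K \<Longrightarrow> F j t \<le> b t)
                  \<Longrightarrow> F' k t < b' t"
    and "k \<in> K" "t \<ge> t0"
  shows "F k t < b t"
proof (rule ccontr)
  assume "\<not> F k t < b t"
  have "continuous_on {t0..} (\<lambda>s. b s - F j s)" if "j \<in> K" for j
    using dF[OF that] db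
    by (intro continuous_intros) (auto simp: continuous_on_eq_continuous_within intro: DERIV_continuous)
  then obtain T k1 where k1: "k1 \<in> K" "t0 < T" "b T - F k1 T = 0"
    and below: "\<And>j. j \<in> K \<Longrightarrow> b T - F j T \<ge> 0"
    and before: "\<And>j s. j \<in> K \<Longrightarrow> t0 \<le> s \<Longrightarrow> s < T \<Longrightarrow> b s - F j s > 0"
    by (rule first_touch[where G="\<lambda>j s. b s - F j s", OF \<open>finite K\<close> _ _ \<open>k \<in> K\<close> \<open>t \<ge> t0\<close>])
      (use start \<open>\<not> F k t < b t\<close> in auto)
  have "F' k1 T < b' T" using below k1 by (intro touch) auto
  moreover have "((\<lambda>s. b s - F k1 s) has_real_derivative b' T - F' k1 T) (at T within {t0..})"
    using k1 by (intro derivative_intros db dF) auto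
  ultimately obtain d where "d > 0"
    and d: "\<And>h. h > 0 \<Longrightarrow> T - h \<in> {t0..} \<Longrightarrow> h < d \<Longrightarrow> b (T - h) - F k1 (T - h) < b T - F k1 T"
    using has_real_derivative_pos_inc_left[of _ "b' T - F' k1 T"] by force
  define h where "h = min (d / 2) (T - t0)"
  have "0 < h" "h < d" "T - h \<in> {t0..}" using \<open>d > 0\<close> k1(2) by (auto simp: h_def)
  then show False using d[of h] before[OF k1(1), of "T - h"] k1(3) by auto
qed

lemma inner_diff_nonpos_of_norm_le:
  fixes a b :: "'a::real_inner"
  assumes "norm b \<le> norm a"
  shows "inner a (b - a) \<le> 0"
proof -
  have "inner a (b - a) = inner a b - (norm a)\<^sup>2"
    by (simp add: inner_diff_right power2_norm_eq_inner)
  also have "\<dots> \<le> norm a * norm b - (norm a)\<^sup>2" using norm_cauchy_schwarz by simp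
  also have "\<dots> \<le> 0" using assms by (simp add: power2_eq_square mult_left_mono)
  finally show ?thesis .
qed

lemma inner_powr_scaleR_monotone:
  fixes a b :: "'a::real_inner"
  assumes "p \<ge> 0"
  shows "inner (a - b) ((norm a powr p) *\<^sub>R a - (norm b powr p) *\<^sub>R b) \<ge> 0"
proof -
  define P Q where "P = norm a powr p" and "Q = norm b powr p"
  have "(P * norm a - Q * norm b) * (norm a - norm b) \<ge> 0"
  proof (cases "norm a \<le> norm b")
    case True
    then have "P \<le> Q" unfolding P_def Q_def using assms by (intro powr_mono2) auto
    with True have "P * norm a \<le> Q * norm b" by (intro mult_mono) (auto simp: Q_def)
    with True show ?thesis by (intro mult_nonpos_nonpos) auto
  next
    case False
    then have "Q \<le> P" unfolding P_def Q_def using assms by (intro powr_mono2) auto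
    with False have "Q * norm b \<le> P * norm a" by (intro mult_mono) (auto simp: P_def)
    with False show ?thesis by (intro mult_nonneg_nonneg) auto
  qed
  also have "(P * norm a - Q * norm b) * (norm a - norm b)
      = P * (norm a)\<^sup>2 + Q * (norm b)\<^sup>2 - (P + Q) * (norm a * norm b)"
    by (simp add: power2_eq_square algebra_simps)
  also have "\<dots> \<le> P * (norm a)\<^sup>2 + Q * (norm b)\<^sup>2 - (P + Q) * inner a b"
    using mult_left_mono[OF norm_cauchy_schwarz[of a b], of "P + Q"] by (simp add: P_def Q_def)
  also have "\<dots> = inner (a - b) (P *\<^sub>R a - Q *\<^sub>R b)"
    by (simp add: inner_diff_right inner_diff_left power2_norm_eq_inner inner_commute algebra_simps)
  finally show ?thesis by (simp add: P_def Q_def)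
qed

lemma sum_mult_nonpos_le_lower_weights:
  fixes w m a :: "'i \<Rightarrow> real"
  assumes "\<And>j. j \<in> I \<Longrightarrow> c * m j \<le> w j" and "\<And>j. j \<in> I \<Longrightarrow> a j \<le> 0"
  shows "(\<Sum>j\<in>I. w j * a j) \<le> c * (\<Sum>j\<in>I. m j * a j)"
proof -
  have "(\<Sum>j\<in>I. w j * a j) \<le> (\<Sum>j\<in>I. c * m j * a j)"
    using assms by (intro sum_mono mult_right_mono_neg) auto
  then show ?thesis by (simp add: sum_distrib_left mult.assoc)
qed

lemma vel_diam_le:
  fixes v :: "nat \<Rightarrow> real \<Rightarrow> 'a::real_normed_vector"
  assumes "N \<ge> 1" and "\<And>i j. i < N \<Longrightarrow> j < N \<Longrightarrow> norm (v i t - v j t) \<le> c"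
  shows "vel_diam N v t \<le> c"
proof -
  let ?D = "{norm (v i t - v j t) | i j. i < N \<and> j < N}"
  have "finite ?D" by (rule finite_image_set2) auto
  moreover from assms(1) have "norm (v 0 t - v 0 t) \<in> ?D" by (intro CollectI exI[of _ 0]) auto
  ultimately show ?thesis unfolding vel_diam_def using assms(2) by (subst Max_le_iff) auto
qed

locale csf_flock =
  fixes N :: nat and m :: "nat \<Rightarrow> real" and \<sigma> p \<kappa> :: real
    and \<phi> :: "real \<Rightarrow> real"
    and x v :: "nat \<Rightarrow> real \<Rightarrow> 'a::euclidean_space" and \<theta> :: "nat \<Rightarrow> real \<Rightarrow> real"
  assumes N_pos: "N \<ge> 1"
    and m_pos: "\<And>i. i < N \<Longrightarrow> m i > 0"
    and \<sigma>_pos: "\<sigma> > 0" and p_pos: "p > 0" and \<kappa>_pos: "\<kappa> > 0"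
    and kernel: "comm_kernel \<phi>"
    and inf_\<phi>_pos: "(INF r\<in>{0..}. \<phi> r) > 0"
    and strong_coupling: "(INF r\<in>{0..}. \<phi> r) * (\<Sum>i<N. m i)
           > \<sigma> * ((\<Sum>i<N. m i * \<theta> i 0) / (\<Sum>i<N. m i))"
    and solution: "CSF_solution N m \<sigma> p \<kappa> \<phi> x v \<theta>"
begin

definition "\<phi>_min = (INF r\<in>{0..}. \<phi> r)"
definition "mass = (\<Sum>i<N. m i)"
definition "\<theta>_bar = (\<Sum>i<N. m i * \<theta> i 0) / mass"
definition "\<phi>_at i j t = \<phi> (norm (x i t - x j t))"
definition "d\<theta> i t = \<kappa> * (\<Sum>j<N. m j * \<phi>_at i j t * (\<theta> j t - \<theta> i t))"
definition "dv i t = (\<Sum>j<N. (m j * \<phi>_at i j t) *\<^sub>R (v j t - v i t))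
            + (\<sigma> * (\<theta> i t - norm (v i t) powr p)) *\<^sub>R v i t"

lemma \<phi>_min_pos: "\<phi>_min > 0"
  using inf_\<phi>_pos by (simp add: \<phi>_min_def)

lemma \<phi>_at_ge: "\<phi>_at i j t \<ge> \<phi>_min"
proof -
  have "bdd_below (\<phi> ` {0..})" using kernel unfolding comm_kernel_def
    by (intro bdd_belowI2[of _ 0]) (auto intro: less_imp_le)
  then show ?thesis unfolding \<phi>_min_def \<phi>_at_def by (rule cINF_lower) auto
qed

lemma \<phi>_at_sym: "\<phi>_at i j t = \<phi>_at j i t"
  unfolding \<phi>_at_def by (simp add: norm_minus_commute)

lemma mass_pos: "mass > 0"
  unfolding mass_def using m_pos N_pos by (intro sum_pos) (auto simp: lessThan_empty_iff)

lemma weight_ge: "j < N \<Longrightarrow> \<phi>_min * m j \<le> m j * \<phi>_at i j t"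
  using m_pos[of j] \<phi>_at_ge[of i j t] by (simp add: mult.commute mult_left_mono)

lemma weight_pos: "j < N \<Longrightarrow> m j * \<phi>_at i j t > 0"
  using m_pos[of j] \<phi>_at_ge[of i j t] \<phi>_min_pos by simp

lemma has_real_derivative_\<theta>:
  "t \<ge> 0 \<Longrightarrow> i < N \<Longrightarrow> (\<theta> i has_real_derivative d\<theta> i t) (at t within {0..})"
  using solution unfolding CSF_solution_def d\<theta>_def \<phi>_at_def by auto

lemma has_vector_derivative_v:
  "t \<ge> 0 \<Longrightarrow> i < N \<Longrightarrow> (v i has_vector_derivative dv i t) (at t within {0..})"
  using solution unfolding CSF_solution_def dv_def \<phi>_at_def by auto

lemma weighted_\<theta>_conserved:
  assumes "t \<ge> 0"
  shows "(\<Sum>i<N. m i * \<theta> i t) = mass * \<theta>_bar"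
proof -
  have no_flux: "(\<Sum>i<N. m i * d\<theta> i s) = 0" for s
  proof -
    have "(\<Sum>i<N. m i * d\<theta> i s) = \<kappa> * ((\<Sum>i<N. \<Sum>j<N. m i * m j * \<phi>_at i j s * \<theta> j s)
        - (\<Sum>i<N. \<Sum>j<N. m i * m j * \<phi>_at i j s * \<theta> i s))"
      unfolding d\<theta>_def by (simp add: sum_distrib_left sum_subtractf[symmetric] algebra_simps)
    also have "(\<Sum>i<N. \<Sum>j<N. m i * m j * \<phi>_at i j s * \<theta> j s)
        = (\<Sum>i<N. \<Sum>j<N. m i * m j * \<phi>_at i j s * \<theta> i s)"
      by (subst sum.swap) (simp add: \<phi>_at_sym mult.commute mult.left_commute)
    finally show ?thesis by simp
  qed
  have "\<exists>c. \<forall>s\<in>{0..}. (\<Sum>i<N. m i * \<theta> i s) = c"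
  proof (rule has_field_derivative_zero_constant)
    fix s :: real assume "s \<in> {0..}"
    then have "((\<lambda>s. \<Sum>i<N. m i * \<theta> i s) has_real_derivative (\<Sum>i<N. m i * d\<theta> i s))
        (at s within {0..})"
      by (intro derivative_eq_intros) (auto intro: has_real_derivative_\<theta>)
    then show "((\<lambda>s. \<Sum>i<N. m i * \<theta> i s) has_real_derivative 0) (at s within {0..})"
      using no_flux by simp
  qed auto
  then have "(\<Sum>i<N. m i * \<theta> i t) = (\<Sum>i<N. m i * \<theta> i 0)" using assms by force
  also have "\<dots> = mass * \<theta>_bar" unfolding \<theta>_bar_def using mass_pos by simp
  finally show ?thesis .
qed

lemma signed_d\<theta>_le_at_extremum:
  assumes "t \<ge> 0" and "i < N"
    and extremal: "\<And>j. j < N \<Longrightarrow> s * \<theta> j t \<le> s * \<theta> i t"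
  shows "s * d\<theta> i t \<le> - \<kappa> * \<phi>_min * mass * (s * (\<theta> i t - \<theta>_bar))"
proof -
  have "(\<Sum>j<N. m j * \<phi>_at i j t * (s * (\<theta> j t - \<theta> i t)))
      \<le> \<phi>_min * (\<Sum>j<N. m j * (s * (\<theta> j t - \<theta> i t)))"
    using extremal by (intro sum_mult_nonpos_le_lower_weights weight_ge) (auto simp: algebra_simps)
  also have "\<dots> = \<phi>_min * (s * ((\<Sum>j<N. m j * \<theta> j t) - mass * \<theta> i t))"
    by (simp add: mass_def sum_distrib_left sum_distrib_right sum_subtractf algebra_simps)
  also have "\<dots> = - \<phi>_min * mass * (s * (\<theta> i t - \<theta>_bar))"
    unfolding weighted_\<theta>_conserved[OF \<open>t \<ge> 0\<close>] by (simp add: algebra_simps)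
  finally have "\<kappa> * (\<Sum>j<N. m j * \<phi>_at i j t * (s * (\<theta> j t - \<theta> i t)))
      \<le> \<kappa> * (- \<phi>_min * mass * (s * (\<theta> i t - \<theta>_bar)))"
    using \<kappa>_pos by (intro mult_left_mono) auto
  then show ?thesis unfolding d\<theta>_def by (simp add: sum_distrib_left algebra_simps)
qed

(* Half of the rate \<kappa> \<phi>_min M delivered by the consensus estimate, so that the barrier
   is met with strict inequality. *)
definition "\<theta>_rate = \<kappa> * \<phi>_min * mass / 2"
definition "\<theta>_const = 1 + (\<Sum>i<N. \<bar>\<theta> i 0 - \<theta>_bar\<bar>)"
definition "\<theta>_err t = \<theta>_const * exp (- \<theta>_rate * t)"

lemma \<theta>_rate_pos: "\<theta>_rate > 0"
  using \<kappa>_pos \<phi>_min_pos mass_pos by (simp add: \<theta>_rate_def)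

lemma \<theta>_err_pos: "\<theta>_err t > 0"
  unfolding \<theta>_err_def \<theta>_const_def by (simp add: add_pos_nonneg sum_nonneg)

lemma \<theta>_consensus:
  assumes "t \<ge> 0" and "i < N"
  shows "\<bar>\<theta> i t - \<theta>_bar\<bar> < \<theta>_err t"
proof -
  (* |\<theta>_i - \<theta>_bar| is the larger of the signed deviations s (\<theta>_i - \<theta>_bar), s = \<plusminus>1,
     and each of these is compared with the barrier separately. *)
  define K where "K = {..<N} \<times> {-1, 1 :: real}"
  define F where "F = (\<lambda>(i, s) t. s * (\<theta> i t - \<theta>_bar))"
  define F' where "F' = (\<lambda>(i, s) t. s * d\<theta> i t)"
  have "F k t < \<theta>_err t" if "k \<in> K" "t \<ge> 0" for k t
  proof (rule barrier_principle[where F' = F' and b' = "\<lambda>t. - \<theta>_rate * \<theta>_err t", OF _ _ _ _ _ that])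
    show "finite K" by (simp add: K_def)
  next
    fix k and t :: real assume "k \<in> K" "0 \<le> t"
    then obtain i s where "k = (i, s)" "i < N" unfolding K_def by auto
    with \<open>0 \<le> t\<close> have "((\<lambda>t. \<theta> i t - \<theta>_bar) has_real_derivative d\<theta> i t - 0) (at t within {0..})"
      by (intro DERIV_diff has_real_derivative_\<theta> DERIV_const)
    from DERIV_cmult[OF this, of s] show "(F k has_real_derivative F' k t) (at t within {0..})"
      unfolding F_def F'_def \<open>k = (i, s)\<close> by simp
  next
    show "(\<theta>_err has_real_derivative - \<theta>_rate * \<theta>_err t) (at t within {0..})" for t
      unfolding \<theta>_err_def by (auto intro!: derivative_eq_intros)
  next
    fix k assume "k \<in> K"
    then obtain i s where k: "k = (i, s)" "i < N" "\<bar>s\<bar> = 1" unfolding K_def by auto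
    have "\<bar>\<theta> i 0 - \<theta>_bar\<bar> \<le> (\<Sum>i<N. \<bar>\<theta> i 0 - \<theta>_bar\<bar>)" using k by (intro member_le_sum) auto
    moreover have "s * (\<theta> i 0 - \<theta>_bar) \<le> \<bar>s * (\<theta> i 0 - \<theta>_bar)\<bar>" by (rule abs_ge_self)
    moreover have "\<bar>s * (\<theta> i 0 - \<theta>_bar)\<bar> = \<bar>\<theta> i 0 - \<theta>_bar\<bar>" by (simp add: abs_mult k(3))
    ultimately show "F k 0 < \<theta>_err 0" unfolding k F_def \<theta>_err_def \<theta>_const_def by simp
  next
    fix k and t :: real assume "k \<in> K" "0 < t" and touch: "F k t = \<theta>_err t"
      and below: "\<And>j. j \<in> K \<Longrightarrow> F j t \<le> \<theta>_err t"
    then obtain i s where k: "k = (i, s)" "i < N" "s \<in> {-1, 1}" unfolding K_def by auto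
    have "s * \<theta> j t \<le> s * \<theta> i t" if "j < N" for j
      using below[of "(j, s)"] touch that k unfolding K_def F_def by (simp add: algebra_simps)
    with signed_d\<theta>_le_at_extremum[of t i s] \<open>0 < t\<close> k(2)
    have "F' k t \<le> - 2 * \<theta>_rate * \<theta>_err t"
      using touch unfolding F_def F'_def k(1) \<theta>_rate_def by simp
    also have "\<dots> < - \<theta>_rate * \<theta>_err t" using \<theta>_rate_pos \<theta>_err_pos by simp
    finally show "F' k t < - \<theta>_rate * \<theta>_err t" .
  qed
  from this[of "(i, 1)" t] this[of "(i, -1)" t] assms show ?thesis
    unfolding K_def F_def by auto
qed

definition "\<theta>_max = \<theta>_bar + \<theta>_const"
definition "speed_max = 1 + (\<Sum>i<N. norm (v i 0)) + (\<bar>\<theta>_max\<bar> + 1) powr (1 / p)"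

lemma \<theta>_less_\<theta>_max:
  assumes "t \<ge> 0" and "i < N"
  shows "\<theta> i t < \<theta>_max"
proof -
  have "\<theta>_err t \<le> \<theta>_const"
    using \<theta>_rate_pos assms(1) \<theta>_err_pos[of 0] by (simp add: \<theta>_err_def mult_left_le)
  with \<theta>_consensus[OF assms] show ?thesis unfolding \<theta>_max_def by linarith
qed

lemma speed_max_pos: "speed_max > 0"
  unfolding speed_max_def by (simp add: add_pos_nonneg sum_nonneg)

lemma \<theta>_max_lt_speed_max_powr: "\<theta>_max < speed_max powr p"
proof -
  have "(\<bar>\<theta>_max\<bar> + 1) powr (1 / p) \<le> speed_max" unfolding speed_max_def by (simp add: sum_nonneg)
  then have "((\<bar>\<theta>_max\<bar> + 1) powr (1 / p)) powr p \<le> speed_max powr p"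
    using p_pos by (intro powr_mono2) auto
  moreover have "((\<bar>\<theta>_max\<bar> + 1) powr (1 / p)) powr p = \<bar>\<theta>_max\<bar> + 1"
    using p_pos by (simp add: powr_powr)
  ultimately show ?thesis by linarith
qed

lemma inner_dv_neg_at_max_speed:
  assumes "t \<ge> 0" and "k < N" and max: "norm (v k t) = speed_max"
    and below: "\<And>j. j < N \<Longrightarrow> norm (v j t) \<le> speed_max"
  shows "inner (v k t) (dv k t) < 0"
proof -
  have "(\<Sum>j<N. (m j * \<phi>_at k j t) * inner (v k t) (v j t - v k t)) \<le> 0"
    using max below weight_pos
    by (intro sum_nonpos mult_nonneg_nonpos inner_diff_nonpos_of_norm_le) (auto intro: less_imp_le)
  moreover have "\<theta> k t - norm (v k t) powr p < 0"
    using \<theta>_less_\<theta>_max[OF assms(1,2)] \<theta>_max_lt_speed_max_powr max by simp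
  then have "(\<sigma> * (\<theta> k t - norm (v k t) powr p)) * inner (v k t) (v k t) < 0"
    using \<sigma>_pos max speed_max_pos by (intro mult_neg_pos mult_pos_neg) auto
  ultimately show ?thesis unfolding dv_def by (simp add: inner_add_right inner_sum_right)
qed

lemma speed_bound:
  assumes "t \<ge> 0" and "i < N"
  shows "norm (v i t) < speed_max"
proof -
  have "(norm (v k t))\<^sup>2 < speed_max\<^sup>2" if "k \<in> {..<N}" "t \<ge> 0" for k t
  proof (rule barrier_principle[where F = "\<lambda>k t. (norm (v k t))\<^sup>2" and b = "\<lambda>_. speed_max\<^sup>2"
        and F' = "\<lambda>k t. 2 * inner (v k t) (dv k t)" and b' = "\<lambda>_. 0", OF _ _ _ _ _ that])
    fix k and t :: real assume "k \<in> {..<N}" "0 \<le> t"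
    then show "((\<lambda>t. (norm (v k t))\<^sup>2) has_real_derivative 2 * inner (v k t) (dv k t))
        (at t within {0..})"
      by (intro has_real_derivative_norm_power2 has_vector_derivative_v) auto
  next
    fix k assume "k \<in> {..<N}"
    then have "norm (v k 0) \<le> (\<Sum>i<N. norm (v i 0))" by (intro member_le_sum) auto
    then have "norm (v k 0) < speed_max"
      unfolding speed_max_def using powr_ge_zero[of "\<bar>\<theta>_max\<bar> + 1" "1 / p"] by linarith
    then show "(norm (v k 0))\<^sup>2 < speed_max\<^sup>2" by (intro power_strict_mono) auto
  next
    fix k and t :: real assume "k \<in> {..<N}" "0 < t" "(norm (v k t))\<^sup>2 = speed_max\<^sup>2"
      and below: "\<And>j. j \<in> {..<N} \<Longrightarrow> (norm (v j t))\<^sup>2 \<le> speed_max\<^sup>2"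
    have "norm (v k t) = speed_max"
      by (rule power2_eq_imp_eq) (use \<open>(norm (v k t))\<^sup>2 = speed_max\<^sup>2\<close> speed_max_pos in auto)
    moreover have "norm (v j t) \<le> speed_max" if "j < N" for j
      by (rule power2_le_imp_le) (use below[of j] that speed_max_pos in auto)
    ultimately have "inner (v k t) (dv k t) < 0"
      by (intro inner_dv_neg_at_max_speed) (use \<open>k \<in> {..<N}\<close> \<open>0 < t\<close> in auto)
    then show "2 * inner (v k t) (dv k t) < 0" by simp
  qed (simp_all add: DERIV_const)
  then have "(norm (v i t))\<^sup>2 < speed_max\<^sup>2" using assms by simp
  then show ?thesis by (rule power_less_imp_less_base) (use speed_max_pos in simp)
qed

lemma alignment_force_at_max_pair:
  assumes "i < N" and "j < N"
    and max: "\<And>k l. k < N \<Longrightarrow> l < N \<Longrightarrow> norm (v k t - v l t) \<le> norm (v i t - v j t)"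
  shows "inner (v i t - v j t) ((\<Sum>k<N. (m k * \<phi>_at i k t) *\<^sub>R (v k t - v i t))
           - (\<Sum>k<N. (m k * \<phi>_at j k t) *\<^sub>R (v k t - v j t)))
         \<le> - \<phi>_min * mass * (norm (v i t - v j t))\<^sup>2"
proof -
  define w where "w = v i t - v j t"
  have to_i: "inner w (v k t - v i t) \<le> 0" if "k < N" for k
    using inner_diff_nonpos_of_norm_le[of "v k t - v j t" w] max[of k j] that \<open>j < N\<close>
    by (simp add: w_def algebra_simps)
  have to_j: "inner w (v j t - v k t) \<le> 0" if "k < N" for k
    using inner_diff_nonpos_of_norm_le[of "v i t - v k t" w] max[of i k] that \<open>i < N\<close>
    by (simp add: w_def inner_diff_right algebra_simps)
  have "inner w ((\<Sum>k<N. (m k * \<phi>_at i k t) *\<^sub>R (v k t - v i t))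
          - (\<Sum>k<N. (m k * \<phi>_at j k t) *\<^sub>R (v k t - v j t)))
      = (\<Sum>k<N. (m k * \<phi>_at i k t) * inner w (v k t - v i t))
        + (\<Sum>k<N. (m k * \<phi>_at j k t) * inner w (v j t - v k t))"
    by (simp add: inner_diff_right inner_sum_right sum_subtractf algebra_simps)
  also have "\<dots> \<le> \<phi>_min * (\<Sum>k<N. m k * inner w (v k t - v i t))
        + \<phi>_min * (\<Sum>k<N. m k * inner w (v j t - v k t))"
    using to_i to_j weight_ge by (intro add_mono sum_mult_nonpos_le_lower_weights) auto
  also have "\<dots> = \<phi>_min * (\<Sum>k<N. m k * (inner w (v k t - v i t) + inner w (v j t - v k t)))"
    by (simp add: distrib_left sum.distrib)
  also have "\<dots> = \<phi>_min * (\<Sum>k<N. m k * - (norm w)\<^sup>2)"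
  proof -
    have "inner w (v k t - v i t) + inner w (v j t - v k t) = - (norm w)\<^sup>2" for k
    proof -
      have "(v k t - v i t) + (v j t - v k t) = - w" by (simp add: w_def)
      then have "inner w (v k t - v i t) + inner w (v j t - v k t) = inner w (- w)"
        by (simp only: inner_add_right[symmetric])
      then show ?thesis by (simp add: power2_norm_eq_inner)
    qed
    then show ?thesis by simp
  qed
  also have "\<dots> = - \<phi>_min * mass * (norm w)\<^sup>2"
    by (simp add: mass_def sum_negf sum_distrib_right[symmetric])
  finally show ?thesis unfolding w_def .
qed

lemma friction_difference_le:
  assumes "t \<ge> 0" and "i < N" and "j < N"
  shows "inner (v i t - v j t) ((\<sigma> * (\<theta> i t - norm (v i t) powr p)) *\<^sub>R v i t
           - (\<sigma> * (\<theta> j t - norm (v j t) powr p)) *\<^sub>R v j t)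
         \<le> \<sigma> * (\<theta> i t * (norm (v i t - v j t))\<^sup>2
               + \<bar>\<theta> i t - \<theta> j t\<bar> * (norm (v i t - v j t) * speed_max))"
proof -
  define w where "w = v i t - v j t"
  define d where "d = \<theta> i t - \<theta> j t"
  have "\<bar>inner w (v j t)\<bar> \<le> norm w * norm (v j t)" by (rule Cauchy_Schwarz_ineq2)
  also have "\<dots> \<le> norm w * speed_max"
    using speed_bound[OF assms(1,3)] by (intro mult_left_mono) auto
  finally have "\<bar>d\<bar> * \<bar>inner w (v j t)\<bar> \<le> \<bar>d\<bar> * (norm w * speed_max)"
    by (intro mult_left_mono) auto
  then have "d * inner w (v j t) \<le> \<bar>d\<bar> * (norm w * speed_max)"
    by (metis abs_ge_self abs_mult order.trans)
  then have "\<sigma> * (d * inner w (v j t)) \<le> \<sigma> * (\<bar>d\<bar> * (norm w * speed_max))"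
    using \<sigma>_pos by (intro mult_left_mono) auto
  moreover have "inner w ((norm (v i t) powr p) *\<^sub>R v i t - (norm (v j t) powr p) *\<^sub>R v j t) \<ge> 0"
    unfolding w_def using p_pos by (intro inner_powr_scaleR_monotone) simp
  then have "\<sigma> * inner w ((norm (v i t) powr p) *\<^sub>R v i t - (norm (v j t) powr p) *\<^sub>R v j t) \<ge> 0"
    using \<sigma>_pos by simp
  moreover have "inner w ((\<sigma> * (\<theta> i t - norm (v i t) powr p)) *\<^sub>R v i t
        - (\<sigma> * (\<theta> j t - norm (v j t) powr p)) *\<^sub>R v j t)
      = \<sigma> * (\<theta> i t * (norm w)\<^sup>2) + \<sigma> * (d * inner w (v j t))
        - \<sigma> * inner w ((norm (v i t) powr p) *\<^sub>R v i t - (norm (v j t) powr p) *\<^sub>R v j t)"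
    unfolding w_def d_def
    by (simp add: inner_diff_right inner_diff_left power2_norm_eq_inner inner_commute algebra_simps)
  ultimately show ?thesis unfolding w_def[symmetric] d_def[symmetric] distrib_left by linarith
qed

definition "align_gap = \<phi>_min * mass - \<sigma> * \<theta>_bar"

lemma align_gap_pos: "align_gap > 0"
  using strong_coupling by (simp add: align_gap_def \<phi>_min_def mass_def \<theta>_bar_def)

lemma velocity_diff_deriv_le:
  assumes "t \<ge> 0" and "i < N" and "j < N"
    and max: "\<And>k l. k < N \<Longrightarrow> l < N \<Longrightarrow> norm (v k t - v l t) \<le> norm (v i t - v j t)"
  shows "inner (v i t - v j t) (dv i t - dv j t)
    \<le> - align_gap * (norm (v i t - v j t))\<^sup>2 + \<sigma> * \<theta>_err t * (norm (v i t - v j t))\<^sup>2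
       + 2 * \<sigma> * \<theta>_err t * speed_max * norm (v i t - v j t)"
    (is "_ \<le> ?rhs")
proof -
  define W where "W = norm (v i t - v j t)"
  have force: "inner (v i t - v j t) ((\<Sum>k<N. (m k * \<phi>_at i k t) *\<^sub>R (v k t - v i t))
           - (\<Sum>k<N. (m k * \<phi>_at j k t) *\<^sub>R (v k t - v j t))) \<le> - \<phi>_min * mass * W\<^sup>2"
    unfolding W_def using assms(2,3) max by (rule alignment_force_at_max_pair)
  have decomp: "dv i t - dv j t = ((\<Sum>k<N. (m k * \<phi>_at i k t) *\<^sub>R (v k t - v i t))
          - (\<Sum>k<N. (m k * \<phi>_at j k t) *\<^sub>R (v k t - v j t)))
        + ((\<sigma> * (\<theta> i t - norm (v i t) powr p)) *\<^sub>R v i t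
          - (\<sigma> * (\<theta> j t - norm (v j t) powr p)) *\<^sub>R v j t)"
    unfolding dv_def by (simp add: algebra_simps)
  have "inner (v i t - v j t) (dv i t - dv j t)
      \<le> - \<phi>_min * mass * W\<^sup>2 + \<sigma> * (\<theta> i t * W\<^sup>2 + \<bar>\<theta> i t - \<theta> j t\<bar> * (W * speed_max))"
    unfolding decomp inner_add_right
    using force friction_difference_le[OF assms(1-3)] unfolding W_def by linarith
  also have "\<dots> \<le> - \<phi>_min * mass * W\<^sup>2 + \<sigma> * ((\<theta>_bar + \<theta>_err t) * W\<^sup>2 + 2 * \<theta>_err t * (W * speed_max))"
  proof -
    have "\<theta> i t \<le> \<theta>_bar + \<theta>_err t" "\<bar>\<theta> i t - \<theta> j t\<bar> \<le> 2 * \<theta>_err t"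
      using \<theta>_consensus[OF assms(1,2)] \<theta>_consensus[OF assms(1,3)] by linarith+
    then show ?thesis using \<sigma>_pos speed_max_pos unfolding W_def
      by (intro add_left_mono mult_left_mono add_mono mult_right_mono) auto
  qed
  also have "\<dots> = ?rhs"
    unfolding align_gap_def W_def by (simp add: algebra_simps)
  finally show ?thesis .
qed

definition "align_rate = min (align_gap / 2) \<theta>_rate"
definition "T0 = ln (4 * \<sigma> * \<theta>_const / align_gap + 1) / \<theta>_rate"
definition "align_const = (2 * speed_max)\<^sup>2 + (8 * \<sigma> * \<theta>_const * speed_max / align_gap)\<^sup>2"
definition "align_bound t = sqrt align_const * exp (- align_rate * (t - T0) / 2)"

lemma align_rate_pos: "align_rate > 0"
  using align_gap_pos \<theta>_rate_pos by (simp add: align_rate_def)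

lemma T0_nonneg: "T0 \<ge> 0"
  unfolding T0_def \<theta>_const_def using \<sigma>_pos align_gap_pos \<theta>_rate_pos
  by (intro divide_nonneg_pos ln_ge_zero) (auto simp: sum_nonneg)

lemma align_const_pos: "align_const > 0"
  using speed_max_pos by (simp add: align_const_def add_pos_nonneg)

lemma align_bound_pos: "align_bound t > 0"
  using align_const_pos by (simp add: align_bound_def)

lemma align_bound_power2: "(align_bound t)\<^sup>2 = align_const * exp (- align_rate * (t - T0))"
proof -
  have "(exp (- align_rate * (t - T0) / 2))\<^sup>2 = exp (- align_rate * (t - T0))"
    by (simp add: power2_eq_square exp_add[symmetric])
  then show ?thesis using align_const_pos by (simp add: align_bound_def power_mult_distrib)
qed

lemma \<theta>_err_small:
  assumes "t \<ge> T0"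
  shows "\<sigma> * \<theta>_err t \<le> align_gap / 4"
proof -
  define c where "c = 4 * \<sigma> * \<theta>_const / align_gap + 1"
  have "c \<ge> 1" unfolding c_def \<theta>_const_def using \<sigma>_pos align_gap_pos by (simp add: sum_nonneg)
  have "\<theta>_rate * T0 = ln c" unfolding T0_def c_def using \<theta>_rate_pos by simp
  then have "exp (- \<theta>_rate * T0) = 1 / c" using \<open>c \<ge> 1\<close> by (simp add: exp_minus field_simps)
  moreover have "exp (- \<theta>_rate * t) \<le> exp (- \<theta>_rate * T0)" using assms \<theta>_rate_pos by simp
  ultimately have "\<theta>_err t \<le> \<theta>_const * (1 / c)"
    using \<theta>_err_pos[of 0] unfolding \<theta>_err_def by (intro mult_left_mono) auto
  then have "\<sigma> * \<theta>_err t \<le> \<sigma> * (\<theta>_const / c)" using \<sigma>_pos by (intro mult_left_mono) auto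
  also have "\<dots> \<le> align_gap / 4"
    using \<open>c \<ge> 1\<close> align_gap_pos unfolding c_def by (simp add: field_simps)
  finally show ?thesis .
qed

lemma friction_error_le_align_bound:
  assumes "t \<ge> T0"
  shows "8 * \<sigma> * \<theta>_err t * speed_max \<le> align_gap * align_bound t"
proof -
  have "align_rate / 2 * (t - T0) \<le> \<theta>_rate * t"
    using assms T0_nonneg align_rate_pos \<theta>_rate_pos unfolding align_rate_def
    by (intro mult_mono) auto
  then have "\<theta>_err t \<le> \<theta>_const * exp (- align_rate * (t - T0) / 2)"
    using \<theta>_err_pos[of 0] by (simp add: \<theta>_err_def mult_left_mono)
  then have "8 * \<sigma> * \<theta>_err t * speed_max
      \<le> align_gap * ((8 * \<sigma> * \<theta>_const * speed_max / align_gap) * exp (- align_rate * (t - T0) / 2))"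
    using \<sigma>_pos speed_max_pos align_gap_pos by (simp add: field_simps mult_left_mono)
  also have "\<dots> \<le> align_gap * align_bound t"
  proof -
    have "8 * \<sigma> * \<theta>_const * speed_max / align_gap \<le> sqrt align_const"
      unfolding align_const_def by (rule real_le_rsqrt) simp
    then show ?thesis unfolding align_bound_def using align_gap_pos by (intro mult_left_mono mult_right_mono) auto
  qed
  finally show ?thesis .
qed

lemma velocity_diff_lt_sqrt_align_const:
  assumes "t \<ge> 0" and "i < N" and "j < N"
  shows "norm (v i t - v j t) < sqrt align_const"
proof -
  have "norm (v i t - v j t) \<le> norm (v i t) + norm (v j t)" by (rule norm_triangle_ineq4)
  also have "\<dots> < 2 * speed_max" using speed_bound[OF assms(1,2)] speed_bound[OF assms(1,3)] by simp
  also have "\<dots> \<le> sqrt align_const"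
    unfolding align_const_def using speed_max_pos by (simp add: real_le_rsqrt)
  finally show ?thesis .
qed

lemma velocity_diff_deriv_lt_at_align_bound:
  assumes "t > T0" and "i < N" and "j < N"
    and touch: "norm (v i t - v j t) = align_bound t"
    and max: "\<And>k l. k < N \<Longrightarrow> l < N \<Longrightarrow> norm (v k t - v l t) \<le> align_bound t"
  shows "2 * inner (v i t - v j t) (dv i t - dv j t) < - align_rate * (align_bound t)\<^sup>2"
proof -
  define W where "W = align_bound t"
  have "W > 0" unfolding W_def by (rule align_bound_pos)
  have "inner (v i t - v j t) (dv i t - dv j t)
      \<le> - align_gap * W\<^sup>2 + \<sigma> * \<theta>_err t * W\<^sup>2 + 2 * \<sigma> * \<theta>_err t * speed_max * W"
    unfolding W_def touch[symmetric] using assms T0_nonneg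
    by (intro velocity_diff_deriv_le) (auto simp: touch)
  also have "\<dots> \<le> - align_gap * W\<^sup>2 + align_gap / 4 * W\<^sup>2 + align_gap / 4 * W * W"
  proof -
    have "\<sigma> * \<theta>_err t * W\<^sup>2 \<le> align_gap / 4 * W\<^sup>2"
      using \<theta>_err_small \<open>t > T0\<close> by (intro mult_right_mono) auto
    moreover have "2 * \<sigma> * \<theta>_err t * speed_max * W \<le> align_gap / 4 * W * W"
      using friction_error_le_align_bound[of t] \<open>t > T0\<close> \<open>W > 0\<close> unfolding W_def
      by (intro mult_right_mono) auto
    ultimately show ?thesis by linarith
  qed
  also have "\<dots> = - align_gap / 2 * W\<^sup>2" by (simp add: power2_eq_square algebra_simps)
  finally have "2 * inner (v i t - v j t) (dv i t - dv j t) \<le> - align_gap * W\<^sup>2" by simp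
  also have "\<dots> < - align_rate * W\<^sup>2"
    using align_gap_pos \<open>W > 0\<close> by (simp add: align_rate_def)
  finally show ?thesis unfolding W_def .
qed

lemma velocity_diff_lt_align_bound_after_T0:
  assumes "t \<ge> T0" and "i < N" and "j < N"
  shows "norm (v i t - v j t) < align_bound t"
proof -
  define K where "K = {..<N} \<times> {..<N}"
  define F where "F = (\<lambda>(i, j) t. (norm (v i t - v j t))\<^sup>2)"
  define F' where "F' = (\<lambda>(i, j) t. 2 * inner (v i t - v j t) (dv i t - dv j t))"
  have "F k t < (align_bound t)\<^sup>2" if "k \<in> K" "t \<ge> T0" for k t
  proof (rule barrier_principle[where F' = F' and b' = "\<lambda>t. - align_rate * (align_bound t)\<^sup>2",
        OF _ _ _ _ _ that])
    show "finite K" by (simp add: K_def)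
  next
    fix k and t :: real assume "k \<in> K" "T0 \<le> t"
    then obtain i j where k: "k = (i, j)" "i < N" "j < N" unfolding K_def by auto
    have "((\<lambda>t. v i t - v j t) has_vector_derivative dv i t - dv j t) (at t within {T0..})"
      using \<open>T0 \<le> t\<close> T0_nonneg k
      by (intro has_vector_derivative_diff has_vector_derivative_within_subset[OF has_vector_derivative_v]) auto
    from has_real_derivative_norm_power2[OF this]
    show "(F k has_real_derivative F' k t) (at t within {T0..})" unfolding F_def F'_def k by simp
  next
    show "((\<lambda>t. (align_bound t)\<^sup>2) has_real_derivative - align_rate * (align_bound t)\<^sup>2) (at t within {T0..})"
      for t unfolding align_bound_power2 by (auto intro!: derivative_eq_intros)
  next
    fix k assume "k \<in> K"
    then obtain i j where k: "k = (i, j)" "i < N" "j < N" unfolding K_def by auto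
    with velocity_diff_lt_sqrt_align_const[OF T0_nonneg] have "norm (v i T0 - v j T0) < align_bound T0"
      by (simp add: align_bound_def)
    then show "F k T0 < (align_bound T0)\<^sup>2" unfolding F_def k by (simp add: power_strict_mono)
  next
    fix k and t :: real assume "k \<in> K" "T0 < t" and touch: "F k t = (align_bound t)\<^sup>2"
      and below: "\<And>l. l \<in> K \<Longrightarrow> F l t \<le> (align_bound t)\<^sup>2"
    then obtain i j where k: "k = (i, j)" "i < N" "j < N" unfolding K_def by auto
    have "norm (v k' t - v l t) \<le> align_bound t" if "k' < N" "l < N" for k' l
      by (rule power2_le_imp_le) (use below[of "(k', l)"] that align_bound_pos[of t] in \<open>auto simp: K_def F_def\<close>)
    moreover have "norm (v i t - v j t) = align_bound t"
      by (rule power2_eq_imp_eq) (use touch align_bound_pos[of t] in \<open>auto simp: F_def k\<close>)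
    ultimately show "F' k t < - align_rate * (align_bound t)\<^sup>2"
      unfolding F'_def k using velocity_diff_deriv_lt_at_align_bound \<open>T0 < t\<close> k by simp
  qed
  from this[of "(i, j)" t] assms have "(norm (v i t - v j t))\<^sup>2 < (align_bound t)\<^sup>2"
    unfolding K_def F_def by simp
  then show ?thesis by (rule power_less_imp_less_base) (rule less_imp_le[OF align_bound_pos])
qed

lemma velocity_diff_le_align_bound:
  assumes "t \<ge> 0" and "i < N" and "j < N"
  shows "norm (v i t - v j t) \<le> align_bound t"
proof (cases "t \<ge> T0")
  case True
  then show ?thesis using velocity_diff_lt_align_bound_after_T0 assms by (simp add: less_imp_le)
next
  case False
  then have "sqrt align_const \<le> align_bound t"
    unfolding align_bound_def using align_rate_pos align_const_pos by (simp add: mult_nonneg_nonpos)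
  with velocity_diff_lt_sqrt_align_const[OF assms] show ?thesis by simp
qed

lemma align_bound_eq: "align_bound t = (sqrt align_const * exp (align_rate * T0 / 2)) * exp (- (align_rate / 2) * t)"
  unfolding align_bound_def by (simp add: exp_add[symmetric] algebra_simps diff_divide_distrib)

end

theorem lemma3p1:
  fixes N :: nat and m :: "nat \<Rightarrow> real" and \<sigma> p \<kappa> :: real
    and \<phi> :: "real \<Rightarrow> real"
    and x v :: "nat \<Rightarrow> real \<Rightarrow> 'a::euclidean_space" and \<theta> :: "nat \<Rightarrow> real \<Rightarrow> real"
  assumes "N \<ge> 1"
    and "\<forall>i<N. m i > 0"
    and "\<sigma> > 0" and "p > 0" and "\<kappa> > 0"
    and "comm_kernel \<phi>"
    and "(INF r\<in>{0..}. \<phi> r) > 0"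
    and "(INF r\<in>{0..}. \<phi> r) * (\<Sum>i<N. m i)
           > \<sigma> * ((\<Sum>i<N. m i * \<theta> i 0) / (\<Sum>i<N. m i))"
    and "\<forall>i<N. \<theta> i 0 > 0"
    and "CSF_solution N m \<sigma> p \<kappa> \<phi> x v \<theta>"
  shows "\<exists>C0 \<delta>. C0 > 0 \<and> \<delta> > 0 \<and> (\<forall>t\<ge>0. vel_diam N v t \<le> C0 * exp (- \<delta> * t))"
proof -
  interpret csf_flock N m \<sigma> p \<kappa> \<phi> x v \<theta>
    using assms by unfold_locales auto
  have "vel_diam N v t \<le> align_bound t" if "t \<ge> 0" for t
    using assms(1) velocity_diff_le_align_bound[OF that] by (rule vel_diam_le)
  then have "\<forall>t\<ge>0. vel_diam N v t \<le> (sqrt align_const * exp (align_rate * T0 / 2)) * exp (- (align_rate / 2) * t)"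
    by (simp add: align_bound_eq)
  then show ?thesis
    using align_const_pos align_rate_pos
    by (intro exI[of _ "sqrt align_const * exp (align_rate * T0 / 2)"] exI[of _ "align_rate / 2"]) auto
qed

end
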